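(* For every natural number $n\ge 2$, the simplicial complex ${\rm Bd}(\mathrm{DG}_n)$ collapses onto $\Delta(\bar\Pi_n)$ (where a simplex of $\mathrm{DG}_n$ is identified with the set partition of $[n]$ into the connected components of the corresponding graph).
   Context: $\mathrm{DG}_n$ is the simplicial complex whose vertices are all pairs $(i,j)$ with $1\le i<j\le n$ (possible edges of a graph on vertex set $[n]=\{1,\dots,n\}$) and whose simplices are the nonempty sets of such edges forming a graph on $[n]$ with at least two connected components. $\Pi_n$ is the partition lattice of all set partitions of $[n]$ ordered by refinement, $\bar\Pi_n=\Pi_n\setminus\{\hat0,\hat1\}$. ${\rm Bd}$ denotes barycentric subdivision and $\Delta(Q)$ the order complex of a poset $Q$ (simplices = nonempty chains). *)

theory Defs
  imports Main "HOL-Library.Disjoint_Sets"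
begin

text \<open>A (finite abstract) simplicial complex is a set of faces; a face is a nonempty
finite set of vertices.\<close>

definition elementary_collapse :: "'a set set \<Rightarrow> 'a set set \<Rightarrow> bool" where
  "elementary_collapse K L \<longleftrightarrow>
     (\<exists>\<sigma> \<tau>. \<sigma> \<in> K \<and> \<tau> \<in> K \<and> \<sigma> \<subset> \<tau> \<and> card \<tau> = card \<sigma> + 1 \<and>
        (\<forall>\<rho>\<in>K. \<sigma> \<subseteq> \<rho> \<longrightarrow> \<rho> = \<sigma> \<or> \<rho> = \<tau>) \<and>
        L = K - {\<sigma>, \<tau>})"

definition collapses_onto :: "'a set set \<Rightarrow> 'a set set \<Rightarrow> bool" where
  "collapses_onto K L \<longleftrightarrow> elementary_collapse\<^sup>*\<^sup>* K L"

definition order_complex :: "'a set \<Rightarrow> ('a \<Rightarrow> 'a \<Rightarrow> bool) \<Rightarrow> 'a set set" where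
  "order_complex P le =
     {c. c \<noteq> {} \<and> finite c \<and> c \<subseteq> P \<and> (\<forall>x\<in>c. \<forall>y\<in>c. le x y \<or> le y x)}"

definition Bd :: "'a set set \<Rightarrow> 'a set set set" where
  "Bd K = order_complex K (\<subseteq>)"

definition edges :: "nat \<Rightarrow> (nat \<times> nat) set" where
  "edges n = {(i, j). 1 \<le> i \<and> i < j \<and> j \<le> n}"

definition graph_rel :: "nat \<Rightarrow> (nat \<times> nat) set \<Rightarrow> (nat \<times> nat) set" where
  "graph_rel n G = ({(i, j). (i, j) \<in> G \<or> (j, i) \<in> G})\<^sup>* \<inter> ({1..n} \<times> {1..n})"

definition components :: "nat \<Rightarrow> (nat \<times> nat) set \<Rightarrow> nat set set" where
  "components n G = {1..n} // graph_rel n G"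

definition DG :: "nat \<Rightarrow> (nat \<times> nat) set set" where
  "DG n = {G. G \<noteq> {} \<and> G \<subseteq> edges n \<and> card (components n G) \<ge> 2}"

definition Pi_lattice :: "nat \<Rightarrow> nat set set set" where
  "Pi_lattice n = {P. partition_on {1..n} P}"

definition refines :: "nat set set \<Rightarrow> nat set set \<Rightarrow> bool" where
  "refines P Q \<longleftrightarrow> (\<forall>B\<in>P. \<exists>C\<in>Q. B \<subseteq> C)"

definition bottom_partition :: "nat \<Rightarrow> nat set set" where
  "bottom_partition n = {{i} | i. i \<in> {1..n}}"

definition top_partition :: "nat \<Rightarrow> nat set set" where
  "top_partition n = {{1..n}}"

definition Pi_bar :: "nat \<Rightarrow> nat set set set" where
  "Pi_bar n = Pi_lattice n - {bottom_partition n, top_partition n}"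

text \<open>Embedding of partitions into faces of DG n: a partition is identified with the
graph whose edges are all pairs inside a common block (its components are the blocks).\<close>

definition clique_graph :: "nat \<Rightarrow> nat set set \<Rightarrow> (nat \<times> nat) set" where
  "clique_graph n P = {(i, j) \<in> edges n. \<exists>B\<in>P. i \<in> B \<and> j \<in> B}"

end

theory Submission
  imports Defs
begin

(* Sending a graph to the union of the complete graphs on its connected components is a
   closure operator on the face poset of DG_n, and its closed faces are exactly the graphs
   of the partitions in Pi_bar_n, with inclusion of graphs matching refinement. For any
   closure operator phi on a finite poset, the order complex collapses onto the order complex
   of the closed elements: if x is a maximal non-closed element, every y > x lies above
   phi x > x, so the chains through x but not through phi x can be paired with their
   extensions by phi x, and removing these pairs one at a time (largest chains first) is a
   sequence of elementary collapses that deletes x. *)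
lemma collapses_onto_remove_pairs:
  assumes "finite S" and "S \<subseteq> K" and "\<forall>c\<in>K. finite c"
    and "\<forall>c\<in>S. a \<notin> c \<and> insert a c \<in> K"
    and "\<forall>c\<in>S. \<forall>\<rho>\<in>K. c \<subseteq> \<rho> \<longrightarrow> \<rho> - {a} \<in> S"
  shows "collapses_onto K (K - S - insert a ` S)"
  using assms
proof (induction S arbitrary: K rule: finite_remove_induct)
  case empty
  then show ?case by (simp add: collapses_onto_def)
next
  case (remove S)
  obtain c where c: "c \<in> S" and c_max: "\<forall>d\<in>S. c \<subseteq> d \<longrightarrow> c = d"
    using finite_has_maximal[OF remove.hyps(1,2)] by blast
  have "a \<notin> c" "insert a c \<in> K" "c \<in> K" "finite c"
    using c remove.prems by auto
  define K' where "K' = K - {c, insert a c}"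
  have "elementary_collapse K K'"
    unfolding elementary_collapse_def
  proof (intro exI conjI)
    show "\<forall>\<rho>\<in>K. c \<subseteq> \<rho> \<longrightarrow> \<rho> = c \<or> \<rho> = insert a c"
    proof (intro ballI impI)
      fix \<rho> assume "\<rho> \<in> K" "c \<subseteq> \<rho>"
      then have "\<rho> - {a} \<in> S" "c \<subseteq> \<rho> - {a}"
        using c remove.prems(4) \<open>a \<notin> c\<close> by auto
      then have "\<rho> - {a} = c" using c_max by blast
      then show "\<rho> = c \<or> \<rho> = insert a c" by blast
    qed
  qed (use \<open>a \<notin> c\<close> \<open>finite c\<close> \<open>c \<in> K\<close> \<open>insert a c \<in> K\<close> K'_def in auto)
  moreover have "collapses_onto K' (K' - (S - {c}) - insert a ` (S - {c}))"
    using remove.prems c by (intro remove.IH[OF c]) (auto simp: K'_def)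
  moreover have "K' - (S - {c}) - insert a ` (S - {c}) = K - S - insert a ` S"
    using c by (auto simp: K'_def)
  ultimately show ?case
    unfolding collapses_onto_def by (metis converse_rtranclp_into_rtranclp)
qed

lemma finite_order_complex: "finite P \<Longrightarrow> finite (order_complex P le)"
  unfolding order_complex_def by (rule finite_subset[of _ "Pow P"]) auto

lemma collapses_onto_order_complex_remove:
  fixes P :: "'a::order set"
  assumes "finite P" and "x \<in> P" and "a \<in> P" and "x < a"
    and a_least: "\<forall>y\<in>P. x < y \<longrightarrow> a \<le> y"
  shows "collapses_onto (order_complex P (\<le>)) (order_complex (P - {x}) (\<le>))"
proof -
  define K where "K = order_complex P (\<le>)"
  define S where "S = {c\<in>K. x \<in> c \<and> a \<notin> c}"
  have "\<forall>c\<in>S. a \<notin> c \<and> insert a c \<in> K"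
  proof
    fix c assume c: "c \<in> S"
    have "\<forall>y\<in>c. y \<le> a \<or> a \<le> y"
    proof
      fix y assume "y \<in> c"
      then have "y \<le> x \<or> x \<le> y" "y \<in> P"
        using c by (auto simp: S_def K_def order_complex_def)
      then show "y \<le> a \<or> a \<le> y"
        using \<open>x < a\<close> a_least by (auto simp: le_less)
    qed
    then show "a \<notin> c \<and> insert a c \<in> K"
      using c \<open>a \<in> P\<close> by (auto simp: S_def K_def order_complex_def)
  qed
  moreover have "\<forall>c\<in>S. \<forall>\<rho>\<in>K. c \<subseteq> \<rho> \<longrightarrow> \<rho> - {a} \<in> S"
    using \<open>x < a\<close> by (auto simp: S_def K_def order_complex_def)
  moreover have "finite S"
    using finite_order_complex[OF \<open>finite P\<close>] by (simp add: S_def K_def)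
  ultimately have "collapses_onto K (K - S - insert a ` S)"
    by (intro collapses_onto_remove_pairs) (auto simp: S_def K_def order_complex_def)
  moreover have "K - S - insert a ` S = order_complex (P - {x}) (\<le>)"
  proof (intro set_eqI iffI)
    fix c assume c: "c \<in> K - S - insert a ` S"
    have "x \<notin> c"
    proof
      assume "x \<in> c"
      then have "c - {a} \<in> S" "c = insert a (c - {a})"
        using c \<open>x < a\<close> by (auto simp: S_def K_def order_complex_def)
      then show False using c by blast
    qed
    then show "c \<in> order_complex (P - {x}) (\<le>)"
      using c by (auto simp: K_def order_complex_def)
  qed (auto simp: S_def K_def order_complex_def)
  ultimately show ?thesis by (simp add: K_def)
qed

lemma collapses_onto_order_complex_closure_fixpoints:
  fixes P :: "'a::order set"
  assumes "finite P" and "\<phi> ` P \<subseteq> P" and "\<forall>x\<in>P. x \<le> \<phi> x"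
    and "\<forall>x\<in>P. \<phi> (\<phi> x) = \<phi> x" and "mono_on P \<phi>"
  shows "collapses_onto (order_complex P (\<le>)) (order_complex {x\<in>P. \<phi> x = x} (\<le>))"
  using assms
proof (induction "card {x\<in>P. \<phi> x \<noteq> x}" arbitrary: P rule: less_induct)
  case less
  let ?N = "{x\<in>P. \<phi> x \<noteq> x}"
  show ?case
  proof (cases "?N = {}")
    case True
    then have "{x\<in>P. \<phi> x = x} = P" by auto
    then show ?thesis by (simp add: collapses_onto_def)
  next
    case False
    have "finite ?N" using less.prems(1) by simp
    then obtain x where "x \<in> ?N" and x_max: "\<forall>y\<in>?N. x \<le> y \<longrightarrow> x = y"
      using finite_has_maximal[OF _ False] by blast
    then have "x \<in> P" "x < \<phi> x" "\<phi> x \<in> P"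
      using less.prems by (auto simp: order.strict_iff_not)
    have "\<forall>y\<in>P. x < y \<longrightarrow> \<phi> x \<le> y"
    proof (intro ballI impI)
      fix y assume "y \<in> P" "x < y"
      then have "\<phi> y = y" using x_max by auto
      then show "\<phi> x \<le> y"
        using mono_onD[OF less.prems(5) \<open>x \<in> P\<close> \<open>y \<in> P\<close>] \<open>x < y\<close> by simp
    qed
    then have "collapses_onto (order_complex P (\<le>)) (order_complex (P - {x}) (\<le>))"
      using \<open>x \<in> P\<close> \<open>\<phi> x \<in> P\<close> \<open>x < \<phi> x\<close> less.prems(1)
      by (intro collapses_onto_order_complex_remove)
    moreover have "collapses_onto (order_complex (P - {x}) (\<le>))
        (order_complex {y\<in>P - {x}. \<phi> y = y} (\<le>))"
    proof (rule less.hyps)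
      have "{y\<in>P - {x}. \<phi> y \<noteq> y} = ?N - {x}" by auto
      then show "card {y\<in>P - {x}. \<phi> y \<noteq> y} < card ?N"
        using card_Diff1_less[OF \<open>finite ?N\<close> \<open>x \<in> ?N\<close>] by (simp only:)
      show "\<phi> ` (P - {x}) \<subseteq> P - {x}"
        using less.prems(2,4) \<open>x \<in> ?N\<close> by auto
    qed (use less.prems in \<open>auto intro: mono_on_subset\<close>)
    moreover have "{y\<in>P - {x}. \<phi> y = y} = {y\<in>P. \<phi> y = y}"
      using \<open>x \<in> ?N\<close> by auto
    ultimately show ?thesis
      unfolding collapses_onto_def by (metis rtranclp_trans)
  qed
qed

lemma order_complex_image:
  assumes "inj_on f A" and "\<forall>x\<in>A. \<forall>y\<in>A. le x y \<longleftrightarrow> le' (f x) (f y)"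
  shows "order_complex (f ` A) le' = (`) f ` order_complex A le"
proof (intro set_eqI iffI)
  fix c assume c: "c \<in> order_complex (f ` A) le'"
  then obtain d where "d \<subseteq> A" "c = f ` d"
    unfolding order_complex_def by (auto simp: subset_image_iff)
  moreover have "finite d"
    using c \<open>c = f ` d\<close> inj_on_subset[OF assms(1) \<open>d \<subseteq> A\<close>]
    by (auto simp: order_complex_def finite_image_iff)
  moreover have "le x y \<or> le y x" if "x \<in> d" "y \<in> d" for x y
  proof -
    have "le' (f x) (f y) \<or> le' (f y) (f x)"
      using c that \<open>c = f ` d\<close> unfolding order_complex_def by blast
    then show ?thesis using assms(2) that \<open>d \<subseteq> A\<close> by blast
  qed
  ultimately have "d \<in> order_complex A le"
    using c by (auto simp: order_complex_def)
  then show "c \<in> (`) f ` order_complex A le" using \<open>c = f ` d\<close> by blast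
next
  fix c assume "c \<in> (`) f ` order_complex A le"
  then obtain d where d: "d \<in> order_complex A le" "c = f ` d" by blast
  have "le' u v \<or> le' v u" if uv: "u \<in> c" "v \<in> c" for u v
  proof -
    obtain x y where "x \<in> d" "y \<in> d" "u = f x" "v = f y" using uv d(2) by blast
    moreover have "x \<in> A" "y \<in> A" "le x y \<or> le y x"
      using d(1) \<open>x \<in> d\<close> \<open>y \<in> d\<close> unfolding order_complex_def by blast+
    ultimately show ?thesis using assms(2) by blast
  qed
  then show "c \<in> order_complex (f ` A) le'"
    using d by (auto simp: order_complex_def)
qed

definition component_closure :: "nat \<Rightarrow> (nat \<times> nat) set \<Rightarrow> (nat \<times> nat) set" where
  "component_closure n G = clique_graph n (components n G)"

lemma equiv_graph_rel: "equiv {1..n} (graph_rel n G)"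
proof (rule equivI)
  let ?R = "{(i, j). (i, j) \<in> G \<or> (j, i) \<in> G}"
  have "sym (?R\<^sup>*)" by (rule sym_rtrancl) (auto simp: sym_def)
  then show "sym (graph_rel n G)" unfolding graph_rel_def sym_def by blast
  show "trans (graph_rel n G)"
    unfolding graph_rel_def by (rule trans_Int) (auto intro: trans_rtrancl simp: trans_def)
qed (auto simp: graph_rel_def refl_on_def)

lemma partition_on_components: "partition_on {1..n} (components n G)"
  unfolding components_def by (rule partition_on_quotient[OF equiv_graph_rel])

lemma clique_graph_quotient:
  assumes "equiv {1..n} r"
  shows "clique_graph n ({1..n} // r) = {(i, j) \<in> edges n. (i, j) \<in> r}"
  using assms by (auto simp: clique_graph_def quotient_def edges_def equiv_class_eq_iff
      intro: equiv_class_self)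

lemma component_closure_eq: "component_closure n G = {(i, j) \<in> edges n. (i, j) \<in> graph_rel n G}"
  unfolding component_closure_def components_def by (rule clique_graph_quotient[OF equiv_graph_rel])

lemma graph_rel_mono: "G \<subseteq> H \<Longrightarrow> graph_rel n G \<subseteq> graph_rel n H"
  unfolding graph_rel_def by (intro Int_mono rtrancl_mono) auto

lemma graph_rel_clique_graph:
  assumes P: "partition_on {1..n} P"
  shows "graph_rel n (clique_graph n P) = {(x, y). \<exists>p\<in>P. x \<in> p \<and> y \<in> p}"
    (is "_ = ?E")
proof
  let ?R = "{(i, j). (i, j) \<in> clique_graph n P \<or> (j, i) \<in> clique_graph n P}"
  have "equiv {1..n} ?E" using equiv_partition_on[OF P] .
  then have "?E\<^sup>* = ?E\<^sup>=" and "\<forall>x\<in>{1..n}. (x, x) \<in> ?E"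
    by (auto simp: equiv_def rtrancl_trancl_reflcl refl_on_def)
  moreover have "?R\<^sup>* \<subseteq> ?E\<^sup>*"
    by (rule rtrancl_mono) (auto simp: clique_graph_def)
  ultimately show "graph_rel n (clique_graph n P) \<subseteq> ?E"
    unfolding graph_rel_def by auto
next
  show "?E \<subseteq> graph_rel n (clique_graph n P)"
  proof clarify
    fix x y p assume "p \<in> P" "x \<in> p" "y \<in> p"
    then have "x \<in> {1..n}" "y \<in> {1..n}" using P by (auto simp: partition_on_def)
    moreover have "x = y \<or> (x, y) \<in> clique_graph n P \<or> (y, x) \<in> clique_graph n P"
      using \<open>p \<in> P\<close> \<open>x \<in> p\<close> \<open>y \<in> p\<close> \<open>x \<in> {1..n}\<close> \<open>y \<in> {1..n}\<close>
      by (cases x y rule: linorder_cases) (auto simp: clique_graph_def edges_def)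
    ultimately show "(x, y) \<in> graph_rel n (clique_graph n P)"
      unfolding graph_rel_def by auto
  qed
qed

lemma components_clique_graph:
  assumes "partition_on {1..n} P"
  shows "components n (clique_graph n P) = P"
  unfolding components_def graph_rel_clique_graph[OF assms]
  by (rule partition_on_eq_quotient[OF assms])

lemma components_empty: "components n {} = bottom_partition n"
  by (auto simp: components_def graph_rel_def bottom_partition_def quotient_def)

lemma clique_graph_bottom_partition: "clique_graph n (bottom_partition n) = {}"
  by (auto simp: clique_graph_def bottom_partition_def edges_def)

lemma inj_on_clique_graph: "inj_on (clique_graph n) (Pi_lattice n)"
  by (rule inj_onI) (metis components_clique_graph Pi_lattice_def mem_Collect_eq)

lemma refines_iff_clique_graph_subset:
  assumes "P \<in> Pi_lattice n" and "Q \<in> Pi_lattice n"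
  shows "refines P Q \<longleftrightarrow> clique_graph n P \<subseteq> clique_graph n Q"
proof
  assume "refines P Q"
  show "clique_graph n P \<subseteq> clique_graph n Q"
  proof
    fix e assume "e \<in> clique_graph n P"
    then obtain i j B where "e = (i, j)" "(i, j) \<in> edges n" "B \<in> P" "i \<in> B" "j \<in> B"
      unfolding clique_graph_def by blast
    moreover obtain C where "C \<in> Q" "B \<subseteq> C"
      using \<open>refines P Q\<close> \<open>B \<in> P\<close> unfolding refines_def by blast
    ultimately show "e \<in> clique_graph n Q"
      unfolding clique_graph_def by blast
  qed
next
  assume "clique_graph n P \<subseteq> clique_graph n Q"
  then have sub: "graph_rel n (clique_graph n P) \<subseteq> graph_rel n (clique_graph n Q)"
    by (rule graph_rel_mono)
  have P_eq: "P = {1..n} // graph_rel n (clique_graph n P)"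
    and Q_eq: "Q = {1..n} // graph_rel n (clique_graph n Q)"
    using assms components_clique_graph by (auto simp: Pi_lattice_def components_def)
  show "refines P Q"
    unfolding refines_def
  proof
    fix B assume "B \<in> P"
    then obtain k where "k \<in> {1..n}" "B = graph_rel n (clique_graph n P) `` {k}"
      using P_eq by (metis quotientE)
    then show "\<exists>C\<in>Q. B \<subseteq> C"
      using sub Q_eq by (metis Image_mono quotientI subset_refl)
  qed
qed

lemma components_component_closure: "components n (component_closure n G) = components n G"
  unfolding component_closure_def by (rule components_clique_graph[OF partition_on_components])

lemma component_closure_idem: "component_closure n (component_closure n G) = component_closure n G"
  unfolding component_closure_def components_component_closure[unfolded component_closure_def] ..

lemma subset_component_closure: "G \<subseteq> edges n \<Longrightarrow> G \<subseteq> component_closure n G"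
  unfolding component_closure_eq graph_rel_def edges_def by auto

lemma mono_component_closure: "mono (component_closure n)"
  unfolding component_closure_eq by (rule monoI) (use graph_rel_mono in blast)

lemma component_closure_in_DG:
  assumes "G \<in> DG n"
  shows "component_closure n G \<in> DG n"
proof -
  have "G \<noteq> {}" "G \<subseteq> edges n" "2 \<le> card (components n G)"
    using assms by (simp_all add: DG_def)
  moreover have "G \<subseteq> component_closure n G" and "component_closure n G \<subseteq> edges n"
    using \<open>G \<subseteq> edges n\<close> subset_component_closure by (auto simp: component_closure_eq)
  ultimately show ?thesis
    by (simp add: DG_def components_component_closure) blast
qed

lemma finite_DG: "finite (DG n)"
proof -
  have "finite (edges n)"
    unfolding edges_def by (rule finite_subset[of _ "{1..n} \<times> {1..n}"]) auto
  then show ?thesis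
    unfolding DG_def by (rule finite_subset[rotated, OF finite_Pow_iff[THEN iffD2]]) auto
qed

lemma two_le_card_partition_on:
  assumes "partition_on A P" and "finite A" and "P \<noteq> {}" and "P \<noteq> {A}"
  shows "2 \<le> card P"
proof -
  have "finite P" using finite_elements[OF assms(2,1)] .
  moreover have "card P \<noteq> 1"
  proof
    assume "card P = 1"
    then obtain B where "P = {B}" by (rule card_1_singletonE)
    then show False using assms(1,4) partition_onD1 by fastforce
  qed
  ultimately show ?thesis using assms(3) by (cases "card P") auto
qed

lemma DG_component_closure_fixpoints:
  "{G \<in> DG n. component_closure n G = G} = clique_graph n ` Pi_bar n"
proof (intro set_eqI iffI)
  fix G assume G: "G \<in> {G \<in> DG n. component_closure n G = G}"
  define P where "P = components n G"
  have "G = clique_graph n P" using G by (simp add: P_def component_closure_def)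
  moreover have "P \<in> Pi_lattice n"
    using partition_on_components by (simp add: P_def Pi_lattice_def)
  moreover have "P \<noteq> top_partition n"
    using G by (auto simp: P_def DG_def top_partition_def)
  moreover have "P \<noteq> bottom_partition n"
    using G \<open>G = clique_graph n P\<close> clique_graph_bottom_partition by (auto simp: DG_def)
  ultimately show "G \<in> clique_graph n ` Pi_bar n" by (auto simp: Pi_bar_def)
next
  fix G assume "G \<in> clique_graph n ` Pi_bar n"
  then obtain P where P: "P \<in> Pi_bar n" and G: "G = clique_graph n P" by blast
  have part: "partition_on {1..n} P" using P by (simp add: Pi_bar_def Pi_lattice_def)
  then have comp: "components n G = P" using G components_clique_graph by blast
  have "P \<noteq> {}"
    using P part by (auto simp: Pi_bar_def bottom_partition_def partition_on_def)
  then have "2 \<le> card P"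
    using P two_le_card_partition_on[OF part] by (auto simp: Pi_bar_def top_partition_def)
  moreover have "G \<noteq> {}"
    using P comp components_empty by (auto simp: Pi_bar_def)
  moreover have "G \<subseteq> edges n" using G by (auto simp: clique_graph_def)
  ultimately show "G \<in> {G \<in> DG n. component_closure n G = G}"
    using G comp by (auto simp: DG_def component_closure_def)
qed

theorem mainTheorem4:
  fixes n :: nat
  assumes "n \<ge> 2"
  shows "collapses_onto (Bd (DG n))
           ((\<lambda>c. clique_graph n ` c) ` order_complex (Pi_bar n) refines)"
proof -
  have "collapses_onto (Bd (DG n))
      (order_complex {G \<in> DG n. component_closure n G = G} (\<subseteq>))"
    unfolding Bd_def
  proof (rule collapses_onto_order_complex_closure_fixpoints)
    show "\<forall>G\<in>DG n. G \<subseteq> component_closure n G"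
      using subset_component_closure by (auto simp: DG_def)
  qed (auto simp: finite_DG component_closure_in_DG component_closure_idem
      intro: mono_on_subset[OF mono_component_closure])
  also have "{G \<in> DG n. component_closure n G = G} = clique_graph n ` Pi_bar n"
    by (rule DG_component_closure_fixpoints)
  also have "order_complex (clique_graph n ` Pi_bar n) (\<subseteq>)
      = (\<lambda>c. clique_graph n ` c) ` order_complex (Pi_bar n) refines"
  proof (rule order_complex_image)
    have "Pi_bar n \<subseteq> Pi_lattice n" by (auto simp: Pi_bar_def)
    then show "inj_on (clique_graph n) (Pi_bar n)"
      and "\<forall>P\<in>Pi_bar n. \<forall>Q\<in>Pi_bar n. refines P Q \<longleftrightarrow> clique_graph n P \<subseteq> clique_graph n Q"
      using inj_on_subset[OF inj_on_clique_graph] refines_iff_clique_graph_subset by blast+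
  qed
  finally show ?thesis .
qed

end
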